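(* Let $D_5$ be the undirected tree with vertices $v,a,b,c,d$ and edges $va,vb,vc,cd$. Every finite connected undirected graph without loops, without multiple edges, and without subgraphs isomorphic to $D_5$ is one of the following: a cycle with $l\ge 3$ vertices; a path (chain) with $l\ge 0$ edges; a star $K_{1,l}$ with $l\ge 3$ edges; or a connected graph with four vertices.
   Context: "Subgraph" means an arbitrary (not necessarily induced) subgraph. *)

theory Defs
  imports Main
begin

definition simple_graph :: "'a set \<Rightarrow> ('a \<Rightarrow> 'a \<Rightarrow> bool) \<Rightarrow> bool" where
  "simple_graph V E \<longleftrightarrow> finite V \<and> (\<forall>x y. E x y \<longrightarrow> x \<in> V \<and> y \<in> V)
     \<and> (\<forall>x y. E x y \<longrightarrow> E y x) \<and> (\<forall>x. \<not> E x x)"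

definition connected_graph :: "'a set \<Rightarrow> ('a \<Rightarrow> 'a \<Rightarrow> bool) \<Rightarrow> bool" where
  "connected_graph V E \<longleftrightarrow> V \<noteq> {} \<and> (\<forall>x\<in>V. \<forall>y\<in>V. E\<^sup>*\<^sup>* x y)"

definition graph_iso :: "'a set \<Rightarrow> ('a \<Rightarrow> 'a \<Rightarrow> bool) \<Rightarrow> 'b set \<Rightarrow> ('b \<Rightarrow> 'b \<Rightarrow> bool) \<Rightarrow> bool" where
  "graph_iso V E W F \<longleftrightarrow> (\<exists>f. bij_betw f V W \<and> (\<forall>x\<in>V. \<forall>y\<in>V. E x y \<longleftrightarrow> F (f x) (f y)))"

definition has_subgraph_iso :: "'a set \<Rightarrow> ('a \<Rightarrow> 'a \<Rightarrow> bool) \<Rightarrow> 'b set \<Rightarrow> ('b \<Rightarrow> 'b \<Rightarrow> bool) \<Rightarrow> bool" where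
  "has_subgraph_iso V E W F \<longleftrightarrow> (\<exists>f. inj_on f W \<and> f ` W \<subseteq> V \<and> (\<forall>x\<in>W. \<forall>y\<in>W. F x y \<longrightarrow> E (f x) (f y)))"

text \<open>The tree D5: v=0, a=1, b=2, c=3, d=4, edges va, vb, vc, cd.\<close>
definition D5_V :: "nat set" where "D5_V = {0..4}"
definition D5_E :: "nat \<Rightarrow> nat \<Rightarrow> bool" where
  "D5_E x y \<longleftrightarrow> {x, y} = {0, 1} \<or> {x, y} = {0, 2} \<or> {x, y} = {0, 3} \<or> {x, y} = {3, 4}"

definition cycle_V :: "nat \<Rightarrow> nat set" where "cycle_V l = {0..<l}"
definition cycle_E :: "nat \<Rightarrow> nat \<Rightarrow> nat \<Rightarrow> bool" where
  "cycle_E l x y \<longleftrightarrow> x < l \<and> y < l \<and> (y = (x + 1) mod l \<or> x = (y + 1) mod l)"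

definition path_V :: "nat \<Rightarrow> nat set" where "path_V l = {0..l}"
definition path_E :: "nat \<Rightarrow> nat \<Rightarrow> nat \<Rightarrow> bool" where
  "path_E l x y \<longleftrightarrow> x \<le> l \<and> y \<le> l \<and> (y = x + 1 \<or> x = y + 1)"

definition star_V :: "nat \<Rightarrow> nat set" where "star_V l = {0..l}"
definition star_E :: "nat \<Rightarrow> nat \<Rightarrow> nat \<Rightarrow> bool" where
  "star_E l x y \<longleftrightarrow> x \<le> l \<and> y \<le> l \<and> ((x = 0 \<and> y \<noteq> 0) \<or> (y = 0 \<and> x \<noteq> 0))"

end

theory Submission
  imports Defs
begin

(* If some vertex v has three distinct neighbours, D5-freeness forces every vertex at distance two
   from v to be adjacent to v, so by connectivity v is adjacent to all other vertices. If v has at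
   least four neighbours, an edge between two of them together with two further neighbours would
   again span a D5, so the graph is a star; exactly three neighbours give the four-vertex case.
   Otherwise every vertex has degree at most two. A longest path then contains all neighbours of
   its end points, so by connectivity it spans the graph, and the only edge besides the path edges
   that can exist joins its two ends: the graph is a path or a cycle. *)

lemma simple_graphD:
  assumes "simple_graph V E"
  shows "finite V" and "E x y \<Longrightarrow> x \<in> V" and "E x y \<Longrightarrow> y \<in> V"
    and "E x y \<Longrightarrow> E y x" and "\<not> E x x"
  using assms unfolding simple_graph_def by blast+

lemma graph_iso_if_bij_betw:
  assumes "bij_betw g A V" and "\<And>i j. i \<in> A \<Longrightarrow> j \<in> A \<Longrightarrow> E (g i) (g j) \<longleftrightarrow> F i j"
  shows "graph_iso V E A F"
proof -
  have inj: "inj_on g A" and onto: "g ` A = V"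
    using assms(1) by (auto simp: bij_betw_def)
  have "E x y \<longleftrightarrow> F (the_inv_into A g x) (the_inv_into A g y)" if "x \<in> V" "y \<in> V" for x y
  proof -
    from that onto obtain i j where "i \<in> A" "j \<in> A" "x = g i" "y = g j" by blast
    then show ?thesis using assms(2) by (simp add: the_inv_into_f_f[OF inj])
  qed
  then show ?thesis
    unfolding graph_iso_def using bij_betw_the_inv_into[OF assms(1)] by blast
qed

lemma connected_graph_subset_if_closed:
  assumes "connected_graph V E" and "v \<in> V" and "v \<in> S"
    and "\<And>x y. x \<in> S \<Longrightarrow> E x y \<Longrightarrow> y \<in> S"
  shows "V \<subseteq> S"
proof
  fix y assume "y \<in> V"
  with assms(1,2) have "E\<^sup>*\<^sup>* v y" unfolding connected_graph_def by blast
  then show "y \<in> S" by induction (use assms(3,4) in blast)+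
qed

lemma has_subgraph_iso_D5I:
  assumes "simple_graph V E" and "E v a" "E v b" "E v c" "E c d"
    and "distinct [v, a, b, c, d]"
  shows "has_subgraph_iso V E D5_V D5_E"
  unfolding has_subgraph_iso_def
proof (intro exI conjI)
  let ?f = "nth [v, a, b, c, d]"
  show "inj_on ?f D5_V"
    using assms(6) by (intro inj_on_nth) (auto simp: D5_V_def)
  have D5_V: "D5_V = {0, 1, 2, 3, 4}" by (auto simp: D5_V_def)
  have "v \<in> V" "a \<in> V" "b \<in> V" "c \<in> V" "d \<in> V"
    using assms(2-5) by (auto intro: simple_graphD(2,3)[OF assms(1)])
  then show "?f ` D5_V \<subseteq> V" unfolding D5_V by simp
  have "D5_E x y \<Longrightarrow> E (?f x) (?f y)" for x y
    using assms(2-5) simple_graphD(4)[OF assms(1)]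
    unfolding D5_E_def doubleton_eq_iff by (elim disjE conjE) simp_all
  then show "\<forall>x\<in>D5_V. \<forall>y\<in>D5_V. D5_E x y \<longrightarrow> E (?f x) (?f y)" by blast
qed

lemma star_graph_iso:
  assumes "simple_graph V E" and "V = insert v N" and "v \<notin> N"
    and "\<And>x. x \<in> N \<Longrightarrow> E v x" and "\<And>x y. x \<in> N \<Longrightarrow> y \<in> N \<Longrightarrow> \<not> E x y"
  shows "graph_iso V E (star_V (card N)) (star_E (card N))"
proof -
  have "finite N" using simple_graphD(1)[OF assms(1)] assms(2) by simp
  then obtain h where h: "bij_betw h {1..card N} N"
    using ex_bij_betw_nat_finite_1 by blast
  define g where "g i = (if i = 0 then v else h i)" for i
  have "bij_betw g {1..card N} N"
    using h by (rule bij_betw_cong[THEN iffD1, rotated]) (simp add: g_def)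
  then have "bij_betw g ({1..card N} \<union> {0}) (N \<union> {v})"
    using assms(3) notIn_Un_bij_betw[of 0 "{1..card N}" g N] by (simp add: g_def)
  moreover have "{1..card N} \<union> {0} = {0..card N}" by auto
  ultimately have "bij_betw g {0..card N} V" using assms(2) by simp
  moreover have "E (g i) (g j) \<longleftrightarrow> star_E (card N) i j"
    if "i \<in> {0..card N}" "j \<in> {0..card N}" for i j
  proof -
    have "i \<noteq> 0 \<Longrightarrow> h i \<in> N" "j \<noteq> 0 \<Longrightarrow> h j \<in> N"
      using that h by (auto dest: bij_betwE)
    moreover have "x \<in> N \<Longrightarrow> E x v" for x
      using assms(4) simple_graphD(4)[OF assms(1)] by blast
    ultimately show ?thesis
      using that assms(4,5) simple_graphD(5)[OF assms(1)]
      by (auto simp: star_E_def g_def)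
  qed
  ultimately show ?thesis unfolding star_V_def by (rule graph_iso_if_bij_betw)
qed

lemma D5_free_adjacent_at_distance_2:
  assumes "simple_graph V E" and "\<not> has_subgraph_iso V E D5_V D5_E"
    and "E v a" "E v b" "E v c" "distinct [a, b, c]"
    and "E v u" "E u d" "d \<noteq> v"
  shows "E v d"
proof (rule ccontr)
  assume "\<not> E v d"
  obtain a' b' where "a' \<in> {a, b, c}" "b' \<in> {a, b, c}" "distinct [a', b', u]"
    using assms(6) by auto
  then have "has_subgraph_iso V E D5_V D5_E"
    using assms(1,3-5,7-9) \<open>\<not> E v d\<close> simple_graphD(5)[OF assms(1)]
    by (intro has_subgraph_iso_D5I[of V E v a' b' u d]) auto
  then show False using assms(2) by blast
qed

lemma D5_free_neighbours_independent:
  assumes "simple_graph V E" and "\<not> has_subgraph_iso V E D5_V D5_E"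
    and "4 \<le> card {z. E v z}" and "E v x" "E v y"
  shows "\<not> E x y"
proof
  assume "E x y"
  let ?N = "{z. E v z}"
  have "finite ?N"
    using simple_graphD(1,3)[OF assms(1)] by (metis mem_Collect_eq rev_finite_subset subsetI)
  then have "card ?N - card {x, y} \<le> card (?N - {x, y})" by (intro diff_card_le_card_Diff) simp
  moreover have "card {x, y} \<le> 2" by (simp add: card_insert_le_m1)
  ultimately have "\<not> card (?N - {x, y}) \<le> Suc 0" using assms(3) by linarith
  then obtain a b where "a \<in> ?N - {x, y}" "b \<in> ?N - {x, y}" "a \<noteq> b"
    using card_le_Suc0_iff_eq \<open>finite ?N\<close> by blast
  then have "has_subgraph_iso V E D5_V D5_E"
    using assms(1,4,5) \<open>E x y\<close> simple_graphD(5)[OF assms(1)]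
    by (intro has_subgraph_iso_D5I[of V E v a b x y]) auto
  then show False using assms(2) by blast
qed

lemma D5_free_star:
  assumes "simple_graph V E" and "connected_graph V E"
    and "\<not> has_subgraph_iso V E D5_V D5_E" and "card V \<noteq> 4"
    and "E v a" "E v b" "E v c" "distinct [a, b, c]"
  shows "\<exists>l\<ge>3. graph_iso V E (star_V l) (star_E l)"
proof -
  define N where "N = {z. E v z}"
  have "v \<notin> N" using simple_graphD(5)[OF assms(1)] by (simp add: N_def)
  have "v \<in> V" using simple_graphD(2)[OF assms(1) assms(5)] .
  have "V \<subseteq> insert v N"
  proof (rule connected_graph_subset_if_closed[OF assms(2) \<open>v \<in> V\<close>])
    show "y \<in> insert v N" if x: "x \<in> insert v N" and e: "E x y" for x y
    proof (cases "x = v")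
      case True
      then show ?thesis using e by (simp add: N_def)
    next
      case False
      then have "E v x" using x by (simp add: N_def)
      then have "y \<noteq> v \<Longrightarrow> E v y"
        using D5_free_adjacent_at_distance_2[OF assms(1,3,5-8)] e by blast
      then show ?thesis by (auto simp: N_def)
    qed
  qed simp
  moreover have "N \<subseteq> V"
    unfolding N_def using simple_graphD(3)[OF assms(1)] by blast
  ultimately have V: "V = insert v N" using \<open>v \<in> V\<close> by blast
  then have "finite N" using simple_graphD(1)[OF assms(1)] by simp
  have "card {a, b, c} \<le> card N"
    using assms(5-7) \<open>finite N\<close> by (intro card_mono) (auto simp: N_def)
  then have "3 \<le> card N" using assms(8) by simp
  moreover have "card N \<noteq> 3" using assms(4) V \<open>v \<notin> N\<close> \<open>finite N\<close> by simp
  ultimately have "4 \<le> card N" by simp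
  then have independent: "\<not> E x y" if "x \<in> N" and "y \<in> N" for x y
    using D5_free_neighbours_independent[OF assms(1,3), of v x y] that unfolding N_def by blast
  have "graph_iso V E (star_V (card N)) (star_E (card N))"
    by (rule star_graph_iso[OF assms(1) V \<open>v \<notin> N\<close> _ independent]) (simp add: N_def)
  then show ?thesis using \<open>3 \<le> card N\<close> by blast
qed

definition simple_path :: "'a set \<Rightarrow> ('a \<Rightarrow> 'a \<Rightarrow> bool) \<Rightarrow> (nat \<Rightarrow> 'a) \<Rightarrow> nat \<Rightarrow> bool" where
  "simple_path V E g k \<longleftrightarrow>
     inj_on g {0..k} \<and> g ` {0..k} \<subseteq> V \<and> (\<forall>i<k. E (g i) (g (Suc i)))"

lemma simple_pathD:
  assumes "simple_path V E g k"
  shows "inj_on g {0..k}" and "i \<le> k \<Longrightarrow> g i \<in> V" and "i < k \<Longrightarrow> E (g i) (g (Suc i))"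
  using assms unfolding simple_path_def by auto

lemma simple_path_rev:
  assumes "simple_graph V E" and "simple_path V E g k"
  shows "simple_path V E (\<lambda>i. g (k - i)) k"
  unfolding simple_path_def
proof (intro conjI allI impI)
  show "inj_on (\<lambda>i. g (k - i)) {0..k}"
  proof (rule inj_onI)
    fix x y assume "x \<in> {0..k}" "y \<in> {0..k}" "g (k - x) = g (k - y)"
    then have "k - x = k - y" using inj_onD[OF simple_pathD(1)[OF assms(2)]] by simp
    then show "x = y" using \<open>x \<in> {0..k}\<close> \<open>y \<in> {0..k}\<close> by simp
  qed
  show "(\<lambda>i. g (k - i)) ` {0..k} \<subseteq> V"
    using simple_pathD(2)[OF assms(2)] by auto
  show "E (g (k - i)) (g (k - Suc i))" if "i < k" for i
  proof -
    have "E (g (k - Suc i)) (g (Suc (k - Suc i)))"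
      using simple_pathD(3)[OF assms(2)] that by simp
    moreover have "Suc (k - Suc i) = k - i" using that by simp
    ultimately show ?thesis using simple_graphD(4)[OF assms(1)] by metis
  qed
qed

lemma simple_path_snoc:
  assumes "simple_path V E g k" and "E (g k) w" and "w \<in> V" and "w \<notin> g ` {0..k}"
  shows "simple_path V E (g(Suc k := w)) (Suc k)"
  using assms unfolding simple_path_def inj_on_def
  by (auto simp: le_Suc_eq less_Suc_eq image_iff image_subset_iff)

lemma simple_path_length_less_card:
  assumes "simple_path V E g k" and "finite V"
  shows "k < card V"
proof -
  have "card {0..k} \<le> card V"
    using assms unfolding simple_path_def by (blast intro: card_inj_on_le)
  then show ?thesis by simp
qed

lemma longest_simple_path_exists:
  assumes "finite V" and "V \<noteq> {}"
  obtains g k where "simple_path V E g k" and "\<forall>g' k'. simple_path V E g' k' \<longrightarrow> k' \<le> k"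
proof -
  from assms(2) obtain v where "v \<in> V" by blast
  then have "simple_path V E (\<lambda>_. v) 0" by (simp add: simple_path_def)
  then obtain k where "\<exists>g. simple_path V E g k" and "\<forall>k'. (\<exists>g'. simple_path V E g' k') \<longrightarrow> k' \<le> k"
    using Nat.ex_has_greatest_nat[of "\<lambda>k. \<exists>g. simple_path V E g k" 0 "card V"]
      simple_path_length_less_card[OF _ assms(1)] by (metis less_imp_le)
  then show ?thesis using that by blast
qed

lemma longest_simple_path_end_neighbour:
  assumes "simple_path V E g k" and "\<forall>g' k'. simple_path V E g' k' \<longrightarrow> k' \<le> k"
    and "E (g k) w" and "w \<in> V"
  shows "w \<in> g ` {0..k}"
proof (rule ccontr)
  assume "w \<notin> g ` {0..k}"
  then have "simple_path V E (g(Suc k := w)) (Suc k)"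
    using assms by (intro simple_path_snoc) auto
  then show False using assms(2) by fastforce
qed

definition max_degree_le_2 :: "('a \<Rightarrow> 'a \<Rightarrow> bool) \<Rightarrow> bool" where
  "max_degree_le_2 E \<longleftrightarrow> (\<forall>v a b c. E v a \<and> E v b \<and> E v c \<longrightarrow> a = b \<or> a = c \<or> b = c)"

lemma max_degree_le_2_path_interior_neighbour:
  assumes "simple_graph V E" and "max_degree_le_2 E" and "simple_path V E g k"
    and "0 < i" "i < k" and "E (g i) w"
  shows "w = g (i - 1) \<or> w = g (Suc i)"
proof -
  have "E (g (i - 1)) (g i)"
    using simple_pathD(3)[OF assms(3), of "i - 1"] assms(4,5) by simp
  then have "E (g i) (g (i - 1))" by (rule simple_graphD(4)[OF assms(1)])
  moreover have "E (g i) (g (Suc i))" using simple_pathD(3)[OF assms(3)] assms(5) .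
  moreover have "i - 1 \<in> {0..k}" "Suc i \<in> {0..k}" using assms(5) by auto
  then have "g (i - 1) \<noteq> g (Suc i)"
    using inj_onD[OF simple_pathD(1)[OF assms(3)]] by fastforce
  ultimately show ?thesis using assms(2,6) unfolding max_degree_le_2_def by blast
qed

lemma max_degree_le_2_path_edge_iff:
  assumes "simple_graph V E" and "max_degree_le_2 E" and "simple_path V E g k"
    and "i \<le> k" "j \<le> k"
  shows "E (g i) (g j) \<longleftrightarrow> j = Suc i \<or> i = Suc j \<or> ({i, j} = {0, k} \<and> E (g 0) (g k))"
proof -
  have sym: "E x y \<longleftrightarrow> E y x" for x y
    using simple_graphD(4)[OF assms(1)] by blast
  note inj = inj_onD[OF simple_pathD(1)[OF assms(3)]]
  note interior = max_degree_le_2_path_interior_neighbour[OF assms(1-3)]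
  have forward: "j = Suc i \<or> (i = 0 \<and> j = k)" if "i < j" "j \<le> k" "E (g i) (g j)" for i j
  proof (cases "i = 0")
    case False
    then have "g j = g (i - 1) \<or> g j = g (Suc i)"
      using interior[of i "g j"] that by simp
    then show ?thesis using inj that by fastforce
  next
    case True
    show ?thesis
    proof (rule ccontr)
      assume contra: "\<not> (j = Suc i \<or> (i = 0 \<and> j = k))"
      then have "0 < j" "j < k" using True that by auto
      then have "g 0 = g (j - 1) \<or> g 0 = g (Suc j)"
        using interior[of j "g 0"] that(3) True by (simp add: sym)
      then show False using inj \<open>0 < j\<close> \<open>j < k\<close> contra True by fastforce
    qed
  qed
  show ?thesis
  proof
    assume e: "E (g i) (g j)"
    then have "i < j \<or> j < i" using simple_graphD(5)[OF assms(1)] by (metis linorder_neqE_nat)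
    then show "j = Suc i \<or> i = Suc j \<or> ({i, j} = {0, k} \<and> E (g 0) (g k))"
      using forward[of i j] forward[of j i] assms(4,5) e by (auto simp: sym)
  next
    assume "j = Suc i \<or> i = Suc j \<or> ({i, j} = {0, k} \<and> E (g 0) (g k))"
    then show "E (g i) (g j)"
      using simple_pathD(3)[OF assms(3)] assms(4,5) by (auto simp: sym doubleton_eq_iff)
  qed
qed

lemma cycle_E_Suc_iff:
  assumes "i \<le> k" "j \<le> k"
  shows "cycle_E (Suc k) i j \<longleftrightarrow> j = Suc i \<or> i = Suc j \<or> {i, j} = {0, k}"
proof -
  have "(n + 1) mod Suc k = (if n = k then 0 else Suc n)" if "n \<le> k" for n
    using that by auto
  then show ?thesis using assms unfolding cycle_E_def by (auto simp: doubleton_eq_iff)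
qed

lemma max_degree_le_2_longest_path_spans:
  assumes "simple_graph V E" and "connected_graph V E" and "max_degree_le_2 E"
    and path: "simple_path V E g k"
    and longest: "\<forall>g' k'. simple_path V E g' k' \<longrightarrow> k' \<le> k"
  shows "bij_betw g {0..k} V"
proof -
  have "V \<subseteq> g ` {0..k}"
  proof (rule connected_graph_subset_if_closed[OF assms(2)])
    show "g 0 \<in> V" "g 0 \<in> g ` {0..k}" using simple_pathD(2)[OF path] by auto
    show "w \<in> g ` {0..k}" if x: "x \<in> g ` {0..k}" and e: "E x w" for x w
    proof -
      obtain i where "i \<le> k" and xi: "x = g i" using x by auto
      have "w \<in> V" using simple_graphD(3)[OF assms(1) e] .
      consider "i = k" | "i = 0" | "0 < i" "i < k" using \<open>i \<le> k\<close> by linarith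
      then show ?thesis
      proof cases
        case 1
        with e xi have "E (g k) w" by simp
        then show ?thesis using longest_simple_path_end_neighbour[OF path longest] \<open>w \<in> V\<close> by blast
      next
        case 2
        with e xi have "E (g (k - k)) w" by simp
        then have "w \<in> (\<lambda>i. g (k - i)) ` {0..k}"
          using longest_simple_path_end_neighbour[OF simple_path_rev[OF assms(1) path] longest]
            \<open>w \<in> V\<close> by blast
        then show ?thesis by auto
      next
        case 3
        then have "w = g (i - 1) \<or> w = g (Suc i)"
          using max_degree_le_2_path_interior_neighbour[OF assms(1,3) path] e xi by blast
        then show ?thesis using 3 by auto
      qed
    qed
  qed
  then show ?thesis
    using path simple_pathD(2)[OF path] unfolding simple_path_def bij_betw_def by blast
qed

lemma max_degree_le_2_spanning_path_graph_iso:
  assumes "simple_graph V E" and "max_degree_le_2 E"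
    and path: "simple_path V E g k" and bij: "bij_betw g {0..k} V"
  shows "(\<exists>l\<ge>3. graph_iso V E (cycle_V l) (cycle_E l)) \<or> (\<exists>l. graph_iso V E (path_V l) (path_E l))"
proof -
  note edge_iff = max_degree_le_2_path_edge_iff[OF assms(1,2) path]
  show ?thesis
  proof (cases "2 \<le> k \<and> E (g 0) (g k)")
    case True
    have "graph_iso V E (cycle_V (Suc k)) (cycle_E (Suc k))"
      unfolding cycle_V_def atLeastLessThanSuc_atLeastAtMost using bij
    proof (rule graph_iso_if_bij_betw)
      fix i j assume "i \<in> {0..k}" "j \<in> {0..k}"
      then show "E (g i) (g j) \<longleftrightarrow> cycle_E (Suc k) i j"
        using edge_iff[of i j] cycle_E_Suc_iff[of i k j] True by simp
    qed
    then show ?thesis using True by (intro disjI1 exI[of _ "Suc k"]) auto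
  next
    case False
    have "graph_iso V E (path_V k) (path_E k)"
      unfolding path_V_def using bij
    proof (rule graph_iso_if_bij_betw)
      fix i j assume "i \<in> {0..k}" "j \<in> {0..k}"
      moreover have "E (g 0) (g k) \<Longrightarrow> k \<noteq> 0" using simple_graphD(5)[OF assms(1)] by metis
      ultimately show "E (g i) (g j) \<longleftrightarrow> path_E k i j"
        using edge_iff[of i j] False by (auto simp: path_E_def doubleton_eq_iff)
    qed
    then show ?thesis by blast
  qed
qed

lemma max_degree_le_2_path_or_cycle:
  assumes "simple_graph V E" and "connected_graph V E" and "max_degree_le_2 E"
  shows "(\<exists>l\<ge>3. graph_iso V E (cycle_V l) (cycle_E l)) \<or> (\<exists>l. graph_iso V E (path_V l) (path_E l))"
proof -
  have "finite V" "V \<noteq> {}"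
    using simple_graphD(1)[OF assms(1)] assms(2) unfolding connected_graph_def by blast+
  then obtain g k where path: "simple_path V E g k"
    and longest: "\<forall>g' k'. simple_path V E g' k' \<longrightarrow> k' \<le> k"
    by (rule longest_simple_path_exists)
  have "bij_betw g {0..k} V"
    by (rule max_degree_le_2_longest_path_spans[OF assms path longest])
  then show ?thesis
    by (rule max_degree_le_2_spanning_path_graph_iso[OF assms(1,3) path])
qed

theorem lemma1:
  fixes V :: "'a set" and E :: "'a \<Rightarrow> 'a \<Rightarrow> bool"
  assumes "simple_graph V E" and "connected_graph V E"
    and "\<not> has_subgraph_iso V E D5_V D5_E"
  shows "(\<exists>l\<ge>3. graph_iso V E (cycle_V l) (cycle_E l))
       \<or> (\<exists>l. graph_iso V E (path_V l) (path_E l))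
       \<or> (\<exists>l\<ge>3. graph_iso V E (star_V l) (star_E l))
       \<or> card V = 4"
proof (cases "card V = 4")
  case False
  show ?thesis
  proof (cases "\<exists>v a b c. E v a \<and> E v b \<and> E v c \<and> distinct [a, b, c]")
    case True
    then show ?thesis using D5_free_star[OF assms False] by blast
  next
    case False
    then have "max_degree_le_2 E" by (auto simp: max_degree_le_2_def)
    then show ?thesis using max_degree_le_2_path_or_cycle[OF assms(1,2)] by blast
  qed
qed simp

end
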